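(* Let $p,q$ be positive integers, $m$ a non-negative integer and $s$ a positive integer. If there is an odd integer $a_1$ with $\frac12 G_{2^m s}=2a_1+1$, then $$\tfrac12 G_{2^{m+1}s}\equiv 1\pmod{2^{e_{g,0}}}\quad\text{and}\quad \tfrac12 G_{2^{m+1}s}\not\equiv 1\pmod{2^{e_{g,0}+1}},$$ where $e_{g,0}=3+\max\{x : 2^x\mid (a_1+1)\}$.
   Context: $A=pq+2$, $B=\sqrt{A^2-4}$, $G_n=\left(\frac{A+B}{2}\right)^n+\left(\frac{A-B}{2}\right)^n$ (an integer). *)

theory Defs
  imports Complex_Main "HOL-Number_Theory.Number_Theory" "HOL-Computational_Algebra.Computational_Algebra"
begin

definition AA :: "nat \<Rightarrow> nat \<Rightarrow> real" where
  "AA p q = real p * real q + 2"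

definition BB :: "nat \<Rightarrow> nat \<Rightarrow> real" where
  "BB p q = sqrt ((AA p q)^2 - 4)"

definition G :: "nat \<Rightarrow> nat \<Rightarrow> nat \<Rightarrow> real" where
  "G p q n = ((AA p q + BB p q) / 2) ^ n + ((AA p q - BB p q) / 2) ^ n"

end

theory Submission
  imports Defs
begin

text \<open>Halving the doubling formula \<open>G\<^sub>2\<^sub>n = G\<^sub>n\<^sup>2 - 2\<close> turns \<open>G\<^sub>n / 2 = 2a + 1\<close> into
  \<open>G\<^sub>2\<^sub>n / 2 = 8a(a + 1) + 1\<close>. For odd \<open>a\<close> the exact power of 2 dividing \<open>8a(a + 1)\<close> is
  \<open>2\<^sup>3\<close> times that dividing \<open>a + 1\<close>, which is the claimed congruence and its sharpness.\<close>

lemma AA_ge_2: "AA p q \<ge> 2"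
  unfolding AA_def by simp

lemma AA_squared_ge_4: "(AA p q)\<^sup>2 \<ge> 4"
proof -
  have "(2::real)\<^sup>2 \<le> (AA p q)\<^sup>2"
    using AA_ge_2 by (rule power_mono) simp
  then show ?thesis
    by simp
qed

lemma BB_squared: "(BB p q)\<^sup>2 = (AA p q)\<^sup>2 - 4"
  unfolding BB_def using AA_squared_ge_4 by simp

lemma BB_nonneg: "BB p q \<ge> 0"
  unfolding BB_def using AA_squared_ge_4 by simp

lemma BB_less_AA: "BB p q < AA p q"
proof -
  have "(BB p q)\<^sup>2 < (AA p q)\<^sup>2"
    using BB_squared by simp
  then show ?thesis
    using BB_nonneg[of p q] AA_ge_2[of p q] power_less_imp_less_base by fastforce
qed

lemma G_roots_product: "(AA p q + BB p q) / 2 * ((AA p q - BB p q) / 2) = 1"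
  using BB_squared[of p q] by (simp add: field_simps power2_eq_square)

lemma G_pos: "G p q n > 0"
proof -
  have "(AA p q - BB p q) / 2 > 0"
    using BB_less_AA by simp
  moreover have "(AA p q + BB p q) / 2 > 0"
    using AA_ge_2[of p q] BB_nonneg[of p q] by simp
  ultimately show ?thesis
    unfolding G_def by (intro add_pos_pos zero_less_power)
qed

lemma G_double: "G p q (2 * n) = (G p q n)\<^sup>2 - 2"
proof -
  define r1 where "r1 = (AA p q + BB p q) / 2"
  define r2 where "r2 = (AA p q - BB p q) / 2"
  have "r1 * r2 = 1"
    unfolding r1_def r2_def by (rule G_roots_product)
  then have "(r1 ^ n + r2 ^ n)\<^sup>2 = (r1 ^ n)\<^sup>2 + (r2 ^ n)\<^sup>2 + 2"
    by (simp add: power2_eq_square algebra_simps flip: power_mult_distrib)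
  then show ?thesis
    unfolding G_def r1_def[symmetric] r2_def[symmetric] power_mult
    by (simp add: power_mult_distrib[symmetric] mult.commute flip: power_mult)
qed

lemma multiplicity_2_eight_times_odd:
  fixes a :: int
  assumes "odd a" "a + 1 \<noteq> 0"
  shows "multiplicity 2 (8 * a * (a + 1)) = 3 + multiplicity 2 (a + 1)"
proof -
  have "a \<noteq> 0"
    using assms(1) by auto
  have "multiplicity 2 (8 * a * (a + 1)) = multiplicity 2 (2 ^ 3 * a * (a + 1))"
    by simp
  also have "\<dots> = multiplicity 2 (2 ^ 3 :: int) + multiplicity 2 a + multiplicity 2 (a + 1)"
    using \<open>a \<noteq> 0\<close> assms(2)
    by (subst prime_elem_multiplicity_mult_distrib; simp add: prime_elem_multiplicity_mult_distrib)+
  also have "multiplicity 2 (2 ^ 3 :: int) = 3"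
    by (rule multiplicity_prime_power) simp
  also have "multiplicity 2 a = 0"
    using assms(1) by (simp add: not_dvd_imp_multiplicity_0)
  finally show ?thesis
    by simp
qed

lemma cong_1_mod_exact_power:
  fixes c p :: int
  assumes "c \<noteq> 1" "\<not> is_unit p"
  shows "[c = 1] (mod p ^ multiplicity p (c - 1))"
    and "\<not> [c = 1] (mod p ^ (multiplicity p (c - 1) + 1))"
  using assms power_dvd_iff_le_multiplicity[of "c - 1" p]
  by (auto simp: cong_iff_dvd_diff simp del: power_Suc)

theorem lemma5:
  fixes p q m s :: nat and a1 :: int
  assumes "p > 0" "q > 0" "s > 0"
    and "odd a1"
    and "G p q (2^m * s) / 2 = 2 * of_int a1 + 1"
  shows "\<exists>c::int. of_int c = G p q (2^(m+1) * s) / 2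
           \<and> [c = 1] (mod 2 ^ (3 + multiplicity 2 (a1 + 1)))
           \<and> \<not> [c = 1] (mod 2 ^ (3 + multiplicity 2 (a1 + 1) + 1))"
proof -
  define c where "c = 8 * a1 * (a1 + 1) + 1"
  have G_half: "G p q (2^m * s) = 4 * of_int a1 + 2"
    using assms(5) by simp
  \<comment> \<open>positivity of \<open>G\<close> excludes \<open>a1 = -1\<close>, the odd value with \<open>a1 + 1 = 0\<close>\<close>
  then have "a1 + 1 \<noteq> 0"
    using G_pos[of p q "2^m * s"] by auto
  then have "multiplicity 2 (c - 1) = 3 + multiplicity 2 (a1 + 1)"
    unfolding c_def using assms(4) multiplicity_2_eight_times_odd by simp
  moreover have "c \<noteq> 1"
    unfolding c_def using \<open>a1 + 1 \<noteq> 0\<close> assms(4) by auto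
  moreover have "of_int c = G p q (2^(m+1) * s) / 2"
    using G_double[of p q "2^m * s"] G_half
    by (simp add: c_def power2_eq_square algebra_simps)
  ultimately show ?thesis
    using cong_1_mod_exact_power[of c 2] by auto
qed

end
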